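(* Let $G$ be a game over a graph $\Gamma=(V,E)$, let $(U,W)$ be a cut of $\Gamma$, and let $A\subseteq U$, $B\subseteq V$, $C\subseteq W$. If $G\vDash A\cup B\rhd C$, then $G\vDash {\cal B}(U)\cup{\cal B}(W)\cup B\rhd C$.
   Context: Graphs are finite, undirected, with no loops or multiple edges; $Adj^+(v)$ is $v$ together with its neighbours. A cut $(U,W)$ is a partition $V=U\sqcup W$. The border of $U\subseteq V$ is ${\cal B}(U)=\{v\in U\mid (v,w)\in E\text{ for some }w\in V\setminus U\}$. A game over $\Gamma$ is a strategic game with player set $V$, finite strategy sets $S_v$, and pay-off functions $u_v$ depending only on the strategies of players in $Adj^+(v)$. $NE(G)$ is its set of pure Nash equilibria. For profiles $\mathbf s,\mathbf t$ and $X\subseteq V$, $\mathbf s=_X\mathbf t$ means they agree on every player of $X$. $G\vDash A\rhd B$ means: for all $\mathbf s,\mathbf t\in NE(G)$, $\mathbf s=_A\mathbf t$ implies $\mathbf s=_B\mathbf t$. *)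

theory Defs
  imports Complex_Main "HOL-Library.FuncSet"
begin

definition simple_graph :: "'v set \<Rightarrow> ('v \<times> 'v) set \<Rightarrow> bool" where
  "simple_graph V E \<longleftrightarrow> finite V \<and> E \<subseteq> V \<times> V \<and> sym E \<and> (\<forall>v. (v, v) \<notin> E)"

definition adj_plus :: "('v \<times> 'v) set \<Rightarrow> 'v \<Rightarrow> 'v set" where
  "adj_plus E v = insert v {w. (v, w) \<in> E}"

definition profiles :: "'v set \<Rightarrow> ('v \<Rightarrow> 's set) \<Rightarrow> ('v \<Rightarrow> 's) set" where
  "profiles V S = Pi\<^sub>E V S"

definition agree_on :: "'v set \<Rightarrow> ('v \<Rightarrow> 's) \<Rightarrow> ('v \<Rightarrow> 's) \<Rightarrow> bool" where
  "agree_on X s t \<longleftrightarrow> (\<forall>x\<in>X. s x = t x)"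

definition game_over ::
  "'v set \<Rightarrow> ('v \<times> 'v) set \<Rightarrow> ('v \<Rightarrow> 's set) \<Rightarrow> ('v \<Rightarrow> ('v \<Rightarrow> 's) \<Rightarrow> real) \<Rightarrow> bool" where
  "game_over V E S u \<longleftrightarrow> simple_graph V E \<and> (\<forall>v\<in>V. finite (S v)) \<and>
     (\<forall>v\<in>V. \<forall>s\<in>profiles V S. \<forall>t\<in>profiles V S.
        agree_on (adj_plus E v) s t \<longrightarrow> u v s = u v t)"

definition NE :: "'v set \<Rightarrow> ('v \<Rightarrow> 's set) \<Rightarrow> ('v \<Rightarrow> ('v \<Rightarrow> 's) \<Rightarrow> real) \<Rightarrow> ('v \<Rightarrow> 's) set" where
  "NE V S u = {s \<in> profiles V S. \<forall>v\<in>V. \<forall>x\<in>S v. u v (s(v := x)) \<le> u v s}"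

definition entails :: "'v set \<Rightarrow> ('v \<Rightarrow> 's set) \<Rightarrow> ('v \<Rightarrow> ('v \<Rightarrow> 's) \<Rightarrow> real) \<Rightarrow> 'v set \<Rightarrow> 'v set \<Rightarrow> bool" where
  "entails V S u A B \<longleftrightarrow> (\<forall>s\<in>NE V S u. \<forall>t\<in>NE V S u. agree_on A s t \<longrightarrow> agree_on B s t)"

definition is_cut :: "'v set \<Rightarrow> 'v set \<Rightarrow> 'v set \<Rightarrow> bool" where
  "is_cut V U W \<longleftrightarrow> U \<union> W = V \<and> U \<inter> W = {}"

definition border :: "'v set \<Rightarrow> ('v \<times> 'v) set \<Rightarrow> 'v set \<Rightarrow> 'v set" where
  "border V E U = {v \<in> U. \<exists>w \<in> V - U. (v, w) \<in> E}"

end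

theory Submission
  imports Defs
begin

text \<open>Given equilibria s and t that agree on the borders of a cut (U,W), the profile that
  plays s on U and t on W is again an equilibrium: every player's closed neighbourhood
  lies in its own side plus the border of the other side, so each player sees exactly the
  game it sees under s (if in U) or under t (if in W). Applying \<open>A \<union> B \<rhd> C\<close> to this
  spliced profile and s transfers the agreement of s and t on the borders to C.\<close>

definition splice :: "'v set \<Rightarrow> ('v \<Rightarrow> 's) \<Rightarrow> ('v \<Rightarrow> 's) \<Rightarrow> 'v \<Rightarrow> 's" where
  "splice U s t = (\<lambda>x. if x \<in> U then s x else t x)"

lemma is_cut_commute: "is_cut V U W \<Longrightarrow> is_cut V W U"
  unfolding is_cut_def by blast

lemma agree_on_mono: "agree_on Y s t \<Longrightarrow> X \<subseteq> Y \<Longrightarrow> agree_on X s t"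
  unfolding agree_on_def by blast

lemma agree_on_fun_upd: "agree_on X s t \<Longrightarrow> agree_on X (s(v := y)) (t(v := y))"
  unfolding agree_on_def by simp

lemma profiles_fun_upd:
  "s \<in> profiles V S \<Longrightarrow> v \<in> V \<Longrightarrow> y \<in> S v \<Longrightarrow> s(v := y) \<in> profiles V S"
  unfolding profiles_def by (auto simp: PiE_def Pi_def extensional_def)

lemma splice_in_profiles:
  assumes "is_cut V U W" and "s \<in> profiles V S" and "t \<in> profiles V S"
  shows "splice U s t \<in> profiles V S"
  using assms unfolding is_cut_def profiles_def splice_def PiE_def Pi_def extensional_def
  by auto

lemma adj_plus_across_cut_in_border:
  assumes "simple_graph V E" and "is_cut V U W" and "v \<in> U"
    and "w \<in> adj_plus E v" and "w \<notin> U"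
  shows "w \<in> border V E W"
proof -
  have "(v, w) \<in> E" using assms(3-5) unfolding adj_plus_def by auto
  moreover from this have "(w, v) \<in> E"
    using assms(1) unfolding simple_graph_def by (meson symE)
  ultimately show ?thesis
    using assms unfolding simple_graph_def is_cut_def border_def by blast
qed

lemma agree_on_adj_plus_across_cut:
  assumes "simple_graph V E" and "is_cut V U W" and "v \<in> U"
    and "agree_on U r s" and "agree_on (border V E W) r s"
  shows "agree_on (adj_plus E v) r s"
  using assms adj_plus_across_cut_in_border[OF assms(1-3)] unfolding agree_on_def by blast

lemma NE_deviation_local:
  assumes "game_over V E S u" and "p \<in> NE V S u" and "r \<in> profiles V S"
    and "v \<in> V" and "y \<in> S v" and "agree_on (adj_plus E v) r p"
  shows "u v (r(v := y)) \<le> u v r"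
proof -
  have dep: "\<And>f g. f \<in> profiles V S \<Longrightarrow> g \<in> profiles V S \<Longrightarrow>
      agree_on (adj_plus E v) f g \<Longrightarrow> u v f = u v g"
    using assms(1,4) unfolding game_over_def by blast
  have p: "p \<in> profiles V S" using assms(2) unfolding NE_def by blast
  have "u v (r(v := y)) = u v (p(v := y))"
    by (rule dep[OF profiles_fun_upd[OF assms(3-5)] profiles_fun_upd[OF p assms(4,5)]
          agree_on_fun_upd[OF assms(6)]])
  also have "\<dots> \<le> u v p" using assms(2,4,5) unfolding NE_def by blast
  also have "\<dots> = u v r" using dep[OF assms(3) p assms(6)] by simp
  finally show ?thesis .
qed

lemma splice_in_NE:
  assumes game: "game_over V E S u" and cut: "is_cut V U W"
    and s: "s \<in> NE V S u" and t: "t \<in> NE V S u"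
    and borders: "agree_on (border V E U \<union> border V E W) s t"
  shows "splice U s t \<in> NE V S u"
proof -
  have graph: "simple_graph V E" using game unfolding game_over_def by blast
  have r: "splice U s t \<in> profiles V S"
    using splice_in_profiles cut s t unfolding NE_def by blast
  have W_side: "x \<notin> U" if "x \<in> border V E W" for x
    using that cut unfolding border_def is_cut_def by blast
  have "u v ((splice U s t)(v := y)) \<le> u v (splice U s t)"
    if v: "v \<in> V" and y: "y \<in> S v" for v y
  proof (cases "v \<in> U")
    case True
    have "agree_on (adj_plus E v) (splice U s t) s"
    proof (rule agree_on_adj_plus_across_cut[OF graph cut True])
      show "agree_on U (splice U s t) s" unfolding agree_on_def splice_def by simp
      show "agree_on (border V E W) (splice U s t) s"
        using borders W_side unfolding agree_on_def splice_def by auto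
    qed
    then show ?thesis using NE_deviation_local[OF game s r v y] by blast
  next
    case False
    then have "v \<in> W" using v cut unfolding is_cut_def by blast
    have "agree_on (adj_plus E v) (splice U s t) t"
    proof (rule agree_on_adj_plus_across_cut[OF graph is_cut_commute[OF cut] \<open>v \<in> W\<close>])
      show "agree_on W (splice U s t) t"
        using cut unfolding agree_on_def splice_def is_cut_def by auto
      show "agree_on (border V E U) (splice U s t) t"
        using borders unfolding agree_on_def splice_def border_def by auto
    qed
    then show ?thesis using NE_deviation_local[OF game t r v y] by blast
  qed
  then show ?thesis using r unfolding NE_def by blast
qed

theorem lemma4:
  fixes V U W A B C :: "'v set" and E :: "('v \<times> 'v) set"
    and S :: "'v \<Rightarrow> 's set" and u :: "'v \<Rightarrow> ('v \<Rightarrow> 's) \<Rightarrow> real"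
  assumes "game_over V E S u"
    and "is_cut V U W"
    and "A \<subseteq> U" and "B \<subseteq> V" and "C \<subseteq> W"
    and "entails V S u (A \<union> B) C"
  shows "entails V S u (border V E U \<union> border V E W \<union> B) C"
  unfolding entails_def
proof (intro ballI impI)
  fix s t assume s: "s \<in> NE V S u" and t: "t \<in> NE V S u"
    and agree: "agree_on (border V E U \<union> border V E W \<union> B) s t"
  have "splice U s t \<in> NE V S u"
    by (rule splice_in_NE[OF assms(1,2) s t agree_on_mono[OF agree]]) blast
  moreover have "agree_on (A \<union> B) (splice U s t) s"
    using agree assms(3) unfolding agree_on_def splice_def by auto
  ultimately have "agree_on C (splice U s t) s"
    using assms(6) s unfolding entails_def by blast
  moreover have "C \<inter> U = {}" using assms(2,5) unfolding is_cut_def by blast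
  ultimately show "agree_on C s t" unfolding agree_on_def splice_def by (auto simp: disjoint_iff)
qed

end
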